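(* Let $\vec u,\vec v$ be disjoint lists of $n$ Boolean variables and $\vec a$ a list of auxiliary variables, and let $\mathcal{O}(\vec u,\vec v,\vec a)$ and $\mathcal{S}(\vec u,\vec v,\vec a)$ be pseudo-Boolean formulas such that $\mathcal{S}$ is a specification over $\vec a$. Suppose that there are cutting planes derivations showing (i) $\mathcal{S}(\vec x,\vec x,\vec a)\vdash\mathcal{O}(\vec x,\vec x,\vec a)$, and (ii) $\mathcal{S}(\vec x,\vec y,\vec a)\cup\mathcal{O}(\vec x,\vec y,\vec a)\cup\mathcal{S}(\vec y,\vec z,\vec b)\cup\mathcal{O}(\vec y,\vec z,\vec b)\cup\mathcal{S}(\vec x,\vec z,\vec c)\vdash\mathcal{O}(\vec x,\vec z,\vec c)$, where $\vec x,\vec y,\vec z$ are lists of $n$ variables and $\vec a,\vec b,\vec c$ are lists of fresh variables of the size of $\vec a$ (all pairwise disjoint). Then the relation $\preceq$ defined by $\mathcal{O}$ and $\mathcal{S}$ is a preorder (reflexive and transitive).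
   Context: PB constraints, formulas, substitutions, $\vdash$ (cutting planes derivability, which is sound) are as usual: a literal is $x$ or $\bar x=1-x$, a PB constraint is $\sum_i a_i\ell_i\ge A$ with negation $\sum_i a_i\bar\ell_i\ge\sum_i a_i-A+1$; for a formula $F(\vec u)$ and a list of literals/truth values $\vec w$ of equal length, $F(\vec w)$ denotes $F$ with each $u_i$ replaced by $w_i$. A formula $\mathcal{S}(\vec x,\vec a)=\{C_1,\dots,C_m\}$ is a specification over $\vec a$ if there are substitutions $\omega_1,\dots,\omega_m$ with $\mathrm{supp}(\omega_i)=\{x:\omega_i(x)\ne x\}\subseteq\vec a$ such that for each $i$, $\{C_1,\dots,C_{i-1},\neg C_i\}\vdash\{C_1{\upharpoonright}_{\omega_i},\dots,C_i{\upharpoonright}_{\omega_i}\}$. Relation defined by $\mathcal{O},\mathcal{S}$: for a list $\vec w$ of $n$ variables disjoint from $\vec a$ and total assignments $\alpha,\beta$ to $\vec w$, $\alpha\preceq\beta$ holds iff there exists an assignment $\rho$ to $\vec a$ such that $\mathcal{S}(\vec w{\upharpoonright}_\alpha,\vec w{\upharpoonright}_\beta,\vec a{\upharpoonright}_\rho)\wedge\mathcal{O}(\vec w{\upharpoonright}_\alpha,\vec w{\upharpoonright}_\beta,\vec a{\upharpoonright}_\rho)$ evaluates to true, where $\vec w{\upharpoonright}_\alpha$ denotes the list of values $\alpha(w_1),\dots,\alpha(w_n)$. *)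

theory Defs
  imports Main
begin

datatype 'v lit = Pos 'v | Neg 'v

fun var_of :: "'v lit \<Rightarrow> 'v" where
  "var_of (Pos x) = x" | "var_of (Neg x) = x"

fun neg_lit :: "'v lit \<Rightarrow> 'v lit" where
  "neg_lit (Pos x) = Neg x" | "neg_lit (Neg x) = Pos x"

datatype 'v pbc = PBC "(int \<times> 'v lit) list" int

type_synonym 'v formula = "'v pbc list"

fun lit_val :: "('v \<Rightarrow> bool) \<Rightarrow> 'v lit \<Rightarrow> int" where
  "lit_val \<tau> (Pos x) = (if \<tau> x then 1 else 0)"
| "lit_val \<tau> (Neg x) = (if \<tau> x then 0 else 1)"

fun sat_pbc :: "('v \<Rightarrow> bool) \<Rightarrow> 'v pbc \<Rightarrow> bool" where
  "sat_pbc \<tau> (PBC ts A) = ((\<Sum>(a,l)\<leftarrow>ts. a * lit_val \<tau> l) \<ge> A)"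

definition sat_formula :: "('v \<Rightarrow> bool) \<Rightarrow> 'v formula \<Rightarrow> bool" where
  "sat_formula \<tau> F = (\<forall>C\<in>set F. sat_pbc \<tau> C)"

fun vars_pbc :: "'v pbc \<Rightarrow> 'v set" where
  "vars_pbc (PBC ts A) = var_of ` snd ` set ts"

definition vars_formula :: "'v formula \<Rightarrow> 'v set" where
  "vars_formula F = (\<Union>C\<in>set F. vars_pbc C)"

fun neg_pbc :: "'v pbc \<Rightarrow> 'v pbc" where
  "neg_pbc (PBC ts A) = PBC (map (\<lambda>(a,l). (a, neg_lit l)) ts) ((\<Sum>(a,l)\<leftarrow>ts. a) - A + 1)"

text \<open>Affine normal form: coefficient of each variable, and the right-hand side after
  moving the constant parts of negative literals (x-bar = 1 - x) to the right.\<close>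
fun lin_coeff :: "'v pbc \<Rightarrow> 'v \<Rightarrow> int" where
  "lin_coeff (PBC ts A) x =
     (\<Sum>(a,l)\<leftarrow>ts. (case l of Pos y \<Rightarrow> if y = x then a else 0
                         | Neg y \<Rightarrow> if y = x then - a else 0))"

fun lin_rhs :: "'v pbc \<Rightarrow> int" where
  "lin_rhs (PBC ts A) = A - (\<Sum>(a,l)\<leftarrow>ts. (case l of Pos y \<Rightarrow> 0 | Neg y \<Rightarrow> a))"

inductive cp_derivable :: "'v pbc set \<Rightarrow> 'v pbc \<Rightarrow> bool" for F where
  cp_input: "C \<in> F \<Longrightarrow> cp_derivable F C"
| cp_lit_axiom: "cp_derivable F (PBC [(1, l)] 0)"
| cp_add: "cp_derivable F (PBC ts1 A1) \<Longrightarrow> cp_derivable F (PBC ts2 A2) \<Longrightarrow>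
     cp_derivable F (PBC (ts1 @ ts2) (A1 + A2))"
| cp_mult: "cp_derivable F (PBC ts A) \<Longrightarrow> c > 0 \<Longrightarrow>
     cp_derivable F (PBC (map (\<lambda>(a,l). (c * a, l)) ts) (c * A))"
| cp_div: "cp_derivable F (PBC ts A) \<Longrightarrow> d > 0 \<Longrightarrow> (\<forall>(a,l)\<in>set ts. a \<ge> 0) \<Longrightarrow>
     cp_derivable F (PBC (map (\<lambda>(a,l). (- ((- a) div d), l)) ts) (- ((- A) div d)))"
| cp_normalize: "cp_derivable F C \<Longrightarrow> lin_coeff D = lin_coeff C \<Longrightarrow> lin_rhs D \<le> lin_rhs C \<Longrightarrow>
     cp_derivable F D"

definition cp_derives :: "'v formula \<Rightarrow> 'v formula \<Rightarrow> bool" (infix "\<turnstile>cp" 50) where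
  "F \<turnstile>cp G = (\<forall>C\<in>set G. cp_derivable (set F) C)"

datatype 'v sterm = SLit "'v lit" | SVal bool

type_synonym 'v subst = "'v \<Rightarrow> 'v sterm"

definition supp :: "'v subst \<Rightarrow> 'v set" where
  "supp \<omega> = {x. \<omega> x \<noteq> SLit (Pos x)}"

fun neg_sterm :: "'v sterm \<Rightarrow> 'v sterm" where
  "neg_sterm (SLit l) = SLit (neg_lit l)" | "neg_sterm (SVal b) = SVal (\<not> b)"

fun subst_lit :: "'v subst \<Rightarrow> 'v lit \<Rightarrow> 'v sterm" where
  "subst_lit \<omega> (Pos x) = \<omega> x" | "subst_lit \<omega> (Neg x) = neg_sterm (\<omega> x)"

fun restrict :: "'v pbc \<Rightarrow> 'v subst \<Rightarrow> 'v pbc" where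
  "restrict (PBC ts A) \<omega> =
     PBC (concat (map (\<lambda>(a,l). case subst_lit \<omega> l of SLit l' \<Rightarrow> [(a, l')] | SVal _ \<Rightarrow> []) ts))
         (A - (\<Sum>(a,l)\<leftarrow>ts. case subst_lit \<omega> l of SVal True \<Rightarrow> a | _ \<Rightarrow> 0))"

definition subst_of :: "'v list \<Rightarrow> 'v sterm list \<Rightarrow> 'v subst" where
  "subst_of us ws x = (case map_of (zip us ws) x of Some t \<Rightarrow> t | None \<Rightarrow> SLit (Pos x))"

definition inst :: "'v formula \<Rightarrow> 'v list \<Rightarrow> 'v sterm list \<Rightarrow> 'v formula" where
  "inst F us ws = map (\<lambda>C. restrict C (subst_of us ws)) F"

definition vlits :: "'v list \<Rightarrow> 'v sterm list" where
  "vlits xs = map (\<lambda>x. SLit (Pos x)) xs"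

definition vals :: "('v \<Rightarrow> bool) \<Rightarrow> 'v list \<Rightarrow> 'v sterm list" where
  "vals \<alpha> xs = map (\<lambda>x. SVal (\<alpha> x)) xs"

definition is_specification :: "'v formula \<Rightarrow> 'v list \<Rightarrow> bool" where
  "is_specification S as =
     (\<exists>\<omega>s. length \<omega>s = length S \<and>
        (\<forall>i < length S. supp (\<omega>s ! i) \<subseteq> set as \<and>
           (take i S @ [neg_pbc (S ! i)]) \<turnstile>cp map (\<lambda>C. restrict C (\<omega>s ! i)) (take (Suc i) S)))"

text \<open>A formula with all variables replaced by truth values "evaluates to true".
  (Its truth value does not depend on the assignment.)\<close>
definition evaluates_true :: "'v formula \<Rightarrow> bool" where
  "evaluates_true F = (\<forall>\<tau>. sat_formula \<tau> F)"

text \<open>alpha <= beta for the relation defined by O, S (formulas over us, vs, as), on assignments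
  to the variable list ws.\<close>
definition rel_OS :: "'v formula \<Rightarrow> 'v formula \<Rightarrow> 'v list \<Rightarrow> 'v list \<Rightarrow> 'v list \<Rightarrow> 'v list
                     \<Rightarrow> ('v \<Rightarrow> bool) \<Rightarrow> ('v \<Rightarrow> bool) \<Rightarrow> bool" where
  "rel_OS Ob S us vs as ws \<alpha> \<beta> =
     (\<exists>\<rho>. evaluates_true
            (inst S (us @ vs @ as) (vals \<alpha> ws @ vals \<beta> ws @ vals \<rho> as) @
             inst Ob (us @ vs @ as) (vals \<alpha> ws @ vals \<beta> ws @ vals \<rho> as)))"

end

theory Submission
  imports Defs
begin

(* Cutting planes is sound, and restricting by a substitution omega amounts to evaluating under
   the composed assignment. Hence a specification can be satisfied from any starting assignment
   by changing only auxiliary variables: if the first i constraints of S hold but the next one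
   fails, the i-th derivation shows that composing with omega_i, which moves only auxiliary
   variables, satisfies the first i+1 constraints. So for all alpha, beta some rho satisfies
   S(alpha, beta, rho). Evaluating the derivations (i) and (ii) at alpha, beta, gamma and at such
   witnesses for the auxiliary copies transfers O from their premises to their conclusions,
   which gives reflexivity and transitivity. *)

fun sterm_val :: "('v \<Rightarrow> bool) \<Rightarrow> 'v sterm \<Rightarrow> bool" where
  "sterm_val \<tau> (SLit l) = (lit_val \<tau> l = 1)"
| "sterm_val \<tau> (SVal b) = b"

lemma lit_val_cases: "lit_val \<tau> l = 0 \<or> lit_val \<tau> l = 1"
  by (cases l) auto

lemma lit_val_neg_lit [simp]: "lit_val \<tau> (neg_lit l) = 1 - lit_val \<tau> l"
  by (cases l) auto

lemma lit_val_cong: "\<tau> (var_of l) = \<tau>' (var_of l) \<Longrightarrow> lit_val \<tau> l = lit_val \<tau>' l"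
  by (cases l) auto

lemma sterm_val_neg_sterm [simp]: "sterm_val \<tau> (neg_sterm t) = (\<not> sterm_val \<tau> t)"
  by (cases t) (use lit_val_cases in auto)

lemma map_sterm_val_vlits [simp]: "map (sterm_val \<tau>) (vlits xs) = map \<tau> xs"
  by (induction xs) (auto simp: vlits_def)

lemma map_sterm_val_vals [simp]: "map (sterm_val \<tau>) (vals \<alpha> xs) = map \<alpha> xs"
  by (simp add: vals_def)

lemma lit_val_subst_lit:
  "lit_val (\<lambda>x. sterm_val \<tau> (\<omega> x)) l = (case subst_lit \<omega> l of SLit l' \<Rightarrow> lit_val \<tau> l' | SVal b \<Rightarrow> of_bool b)"
  by (cases l; cases "\<omega> (var_of l)") (use lit_val_cases in auto)

lemma sat_pbc_restrict: "sat_pbc \<tau> (restrict C \<omega>) = sat_pbc (\<lambda>x. sterm_val \<tau> (\<omega> x)) C"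
proof (cases C)
  case (PBC ts A)
  have "(\<Sum>(a,l)\<leftarrow>concat (map (\<lambda>(a,l). case subst_lit \<omega> l of SLit l' \<Rightarrow> [(a, l')] | SVal _ \<Rightarrow> []) ts).
           a * lit_val \<tau> l)
      + (\<Sum>(a,l)\<leftarrow>ts. case subst_lit \<omega> l of SVal True \<Rightarrow> a | _ \<Rightarrow> 0)
      = (\<Sum>(a,l)\<leftarrow>ts. a * lit_val (\<lambda>x. sterm_val \<tau> (\<omega> x)) l)"
    by (induction ts) (auto simp: lit_val_subst_lit split: sterm.split bool.split)
  then show ?thesis
    using PBC by simp linarith
qed

lemma sat_formula_append [simp]:
  "sat_formula \<tau> (F @ G) = (sat_formula \<tau> F \<and> sat_formula \<tau> G)"
  by (auto simp: sat_formula_def)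

lemma sat_formula_inst:
  "sat_formula \<tau> (inst F us ws) = sat_formula (\<lambda>x. sterm_val \<tau> (subst_of us ws x)) F"
  by (simp add: inst_def sat_formula_def sat_pbc_restrict)

lemma sat_pbc_cong: "(\<And>x. x \<in> vars_pbc C \<Longrightarrow> \<tau> x = \<tau>' x) \<Longrightarrow> sat_pbc \<tau> C = sat_pbc \<tau>' C"
proof (cases C)
  case (PBC ts A)
  assume "\<And>x. x \<in> vars_pbc C \<Longrightarrow> \<tau> x = \<tau>' x"
  then have "lit_val \<tau> l = lit_val \<tau>' l" if "(a, l) \<in> set ts" for a l
    using that PBC by (intro lit_val_cong) force
  then have "(\<Sum>(a,l)\<leftarrow>ts. a * lit_val \<tau> l) = (\<Sum>(a,l)\<leftarrow>ts. a * lit_val \<tau>' l)"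
    by (intro arg_cong[where f = sum_list] map_cong) auto
  then show ?thesis
    using PBC by simp
qed

lemma sat_formula_cong:
  "(\<And>x. x \<in> vars_formula F \<Longrightarrow> \<tau> x = \<tau>' x) \<Longrightarrow> sat_formula \<tau> F = sat_formula \<tau>' F"
  unfolding sat_formula_def vars_formula_def by (metis (mono_tags) UN_I sat_pbc_cong)

lemma sat_formula_inst_iff:
  assumes "distinct us" and "vars_formula F \<subseteq> set us" and "map \<pi> us = map (sterm_val \<tau>) ws"
  shows "sat_formula \<tau> (inst F us ws) = sat_formula \<pi> F"
proof -
  have "sterm_val \<tau> (subst_of us ws x) = \<pi> x" if "x \<in> set us" for x
  proof -
    obtain i where "i < length us" and "x = us ! i"
      using \<open>x \<in> set us\<close> by (metis in_set_conv_nth)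
    moreover have "length ws = length us"
      using arg_cong[OF assms(3), of length] by simp
    ultimately show ?thesis
      using assms(1) nth_map arg_cong[OF assms(3), of "\<lambda>xs. xs ! i"]
      by (simp add: subst_of_def map_of_zip_nth)
  qed
  then show ?thesis
    unfolding sat_formula_inst using assms(2) by (intro sat_formula_cong) auto
qed

lemma sat_pbc_neg_pbc [simp]: "sat_pbc \<tau> (neg_pbc C) = (\<not> sat_pbc \<tau> C)"
proof (cases C)
  case (PBC ts A)
  have "(\<Sum>(a,l)\<leftarrow>map (\<lambda>(a,l). (a, neg_lit l)) ts. a * lit_val \<tau> l)
      = (\<Sum>(a,l)\<leftarrow>ts. a) - (\<Sum>(a,l)\<leftarrow>ts. a * lit_val \<tau> l)"
    by (induction ts) (auto simp: algebra_simps)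
  then show ?thesis
    using PBC by auto
qed

lemma ceiling_div_le_iff: "(d::int) > 0 \<Longrightarrow> (- ((- a) div d) \<le> k) = (a \<le> d * k)"
  by (smt (verit) div_mult_self4 pos_imp_zdiv_neg_iff)

lemma sum_le_ceiling_div_sum:
  assumes "(d::int) > 0"
  shows "(\<Sum>(a,l)\<leftarrow>ts. a * lit_val \<tau> l)
    \<le> d * (\<Sum>(a,l)\<leftarrow>map (\<lambda>(a,l). (- ((- a) div d), l)) ts. a * lit_val \<tau> l)"
proof (induction ts)
  case (Cons p ts)
  obtain a l where "p = (a, l)"
    by fastforce
  moreover have "a \<le> d * - ((- a) div d)"
    using ceiling_div_le_iff[OF assms] by blast
  ultimately show ?case
    using Cons lit_val_cases[of \<tau> l] by (auto simp: algebra_simps)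
qed simp

lemma sum_if_eq_mult:
  "finite V \<Longrightarrow> y \<in> V \<Longrightarrow> (\<Sum>x\<in>V. (if y = x then c else 0) * f x) = (c * f y :: 'a::comm_semiring_1)"
  by (simp add: if_distrib[where f = "\<lambda>c. c * _"] cong: if_cong)

lemma sum_lit_val_linear:
  assumes "finite V" and "var_of ` snd ` set ts \<subseteq> V"
  shows "(\<Sum>(a,l)\<leftarrow>ts. a * lit_val \<tau> l)
    = (\<Sum>x\<in>V. lin_coeff (PBC ts A) x * of_bool (\<tau> x)) + (\<Sum>(a,l)\<leftarrow>ts. case l of Pos _ \<Rightarrow> 0 | Neg _ \<Rightarrow> a)"
  using assms(2)
proof (induction ts)
  case (Cons p ts)
  obtain a l where p: "p = (a, l)"
    by fastforce
  have "var_of l \<in> V"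
    using Cons.prems p by auto
  then have "(\<Sum>x\<in>V. (case l of Pos y \<Rightarrow> if y = x then a else 0 | Neg y \<Rightarrow> if y = x then - a else 0)
        * of_bool (\<tau> x))
      = (case l of Pos y \<Rightarrow> a * of_bool (\<tau> y) | Neg y \<Rightarrow> - a * of_bool (\<tau> y))"
    using assms(1) by (cases l) (simp_all add: sum_if_eq_mult)
  then show ?case
    using Cons p by (cases l) (auto simp: sum.distrib algebra_simps)
qed simp

lemma sat_pbc_iff_linear:
  "finite V \<Longrightarrow> vars_pbc C \<subseteq> V \<Longrightarrow>
    sat_pbc \<tau> C = (lin_rhs C \<le> (\<Sum>x\<in>V. lin_coeff C x * of_bool (\<tau> x)))"
proof (cases C)
  case (PBC ts A)
  assume "finite V" and "vars_pbc C \<subseteq> V"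
  then show ?thesis
    using sum_lit_val_linear[of V ts \<tau> A] PBC
    by (simp only: sat_pbc.simps lin_rhs.simps vars_pbc.simps) linarith
qed

lemma finite_vars_pbc: "finite (vars_pbc C)"
  by (cases C) auto

lemma cp_derivable_sound: "cp_derivable F C \<Longrightarrow> (\<And>D. D \<in> F \<Longrightarrow> sat_pbc \<tau> D) \<Longrightarrow> sat_pbc \<tau> C"
proof (induction rule: cp_derivable.induct)
  case (cp_lit_axiom l)
  then show ?case
    using lit_val_cases[of \<tau> l] by auto
next
  case (cp_mult ts A c)
  have "(\<Sum>(a,l)\<leftarrow>map (\<lambda>(a,l). (c * a, l)) ts. a * lit_val \<tau> l) = c * (\<Sum>(a,l)\<leftarrow>ts. a * lit_val \<tau> l)"
    by (induction ts) (auto simp: algebra_simps)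
  then show ?case
    using cp_mult by simp
next
  case (cp_div ts A d)
  then show ?case
    using sum_le_ceiling_div_sum[OF \<open>d > 0\<close>, where ts = ts and \<tau> = \<tau>]
      ceiling_div_le_iff[OF \<open>d > 0\<close>]
    by force
next
  case (cp_normalize C D)
  let ?V = "vars_pbc C \<union> vars_pbc D"
  have "finite ?V"
    by (simp add: finite_vars_pbc)
  then show ?case
    using cp_normalize sat_pbc_iff_linear[of ?V C \<tau>] sat_pbc_iff_linear[of ?V D \<tau>] by auto
qed auto

lemma cp_derives_sound: "F \<turnstile>cp G \<Longrightarrow> sat_formula \<tau> F \<Longrightarrow> sat_formula \<tau> G"
  unfolding cp_derives_def sat_formula_def using cp_derivable_sound by blast

lemma sterm_val_outside_supp: "x \<notin> supp \<omega> \<Longrightarrow> sterm_val \<tau> (\<omega> x) = \<tau> x"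
  by (simp add: supp_def)

lemma specification_extends:
  assumes "is_specification S as"
  shows "\<exists>\<pi>. (\<forall>x. x \<notin> set as \<longrightarrow> \<pi> x = \<pi>\<^sub>0 x) \<and> sat_formula \<pi> S"
proof -
  obtain \<omega>s where \<omega>s: "\<And>i. i < length S \<Longrightarrow> supp (\<omega>s ! i) \<subseteq> set as \<and>
      take i S @ [neg_pbc (S ! i)] \<turnstile>cp map (\<lambda>C. restrict C (\<omega>s ! i)) (take (Suc i) S)"
    using assms unfolding is_specification_def by blast
  have "\<exists>\<pi>. (\<forall>x. x \<notin> set as \<longrightarrow> \<pi> x = \<pi>\<^sub>0 x) \<and> sat_formula \<pi> (take i S)" if "i \<le> length S" for i
    using that
  proof (induction i)
    case 0
    then show ?case
      by (auto simp: sat_formula_def)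
  next
    case (Suc i)
    then obtain \<pi> where agree: "\<forall>x. x \<notin> set as \<longrightarrow> \<pi> x = \<pi>\<^sub>0 x" and sat: "sat_formula \<pi> (take i S)"
      by auto
    have i: "i < length S"
      using Suc.prems by simp
    then have take_Suc: "take (Suc i) S = take i S @ [S ! i]"
      by (rule take_Suc_conv_app_nth)
    have supp: "supp (\<omega>s ! i) \<subseteq> set as"
      and deriv: "take i S @ [neg_pbc (S ! i)] \<turnstile>cp map (\<lambda>C. restrict C (\<omega>s ! i)) (take (Suc i) S)"
      using \<omega>s[OF i] by blast+
    show ?case
    proof (cases "sat_pbc \<pi> (S ! i)")
      case True
      then show ?thesis
        using agree sat by (auto simp: take_Suc sat_formula_def)
    next
      case False
      let ?\<pi>' = "\<lambda>x. sterm_val \<pi> ((\<omega>s ! i) x)"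
      have "sat_formula \<pi> (take i S @ [neg_pbc (S ! i)])"
        using sat False by (simp add: sat_formula_def[of _ "[_]"])
      then have "sat_formula \<pi> (map (\<lambda>C. restrict C (\<omega>s ! i)) (take (Suc i) S))"
        by (rule cp_derives_sound[OF deriv])
      then have "sat_formula ?\<pi>' (take (Suc i) S)"
        by (simp add: sat_formula_def sat_pbc_restrict)
      moreover have "?\<pi>' x = \<pi>\<^sub>0 x" if "x \<notin> set as" for x
      proof -
        have "x \<notin> supp (\<omega>s ! i)"
          using that supp by blast
        then show ?thesis
          using that agree by (simp add: sterm_val_outside_supp)
      qed
      ultimately show ?thesis
        by (intro exI[of _ ?\<pi>']) blast
    qed
  qed
  from this[of "length S"] show ?thesis
    by simp
qed

lemma distinct_imp_ex_map_eq:
  "distinct ks \<Longrightarrow> length ks = length bs \<Longrightarrow> \<exists>f. map f ks = bs"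
proof (induction ks arbitrary: bs)
  case (Cons k ks)
  then obtain b bs' where "bs = b # bs'"
    by (cases bs) auto
  moreover obtain f where "map f ks = bs'"
    using Cons \<open>bs = b # bs'\<close> by auto
  ultimately show ?case
    using Cons.prems by (intro exI[of _ "f(k := b)"]) auto
qed simp

locale order_encoding =
  fixes Ob S :: "'v formula" and us vs as :: "'v list"
  assumes distinct_vars: "distinct (us @ vs @ as)"
    and vars_Ob_S: "vars_formula Ob \<union> vars_formula S \<subseteq> set us \<union> set vs \<union> set as"
begin

lemma sat_inst_iff:
  assumes "F \<in> {S, Ob}" and "map \<pi> (us @ vs @ as) = map (sterm_val \<tau>) ws"
  shows "sat_formula \<tau> (inst F (us @ vs @ as) ws) = sat_formula \<pi> F"
  using assms distinct_vars vars_Ob_S by (intro sat_formula_inst_iff) auto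

lemma rel_OS_iff:
  assumes "length us = length ws" and "length vs = length ws"
  shows "rel_OS Ob S us vs as ws \<alpha> \<beta> \<longleftrightarrow>
    (\<exists>\<pi>. map \<pi> us = map \<alpha> ws \<and> map \<pi> vs = map \<beta> ws \<and> sat_formula \<pi> S \<and> sat_formula \<pi> Ob)"
proof
  assume "rel_OS Ob S us vs as ws \<alpha> \<beta>"
  then obtain \<rho> where true: "evaluates_true
      (inst S (us @ vs @ as) (vals \<alpha> ws @ vals \<beta> ws @ vals \<rho> as) @
       inst Ob (us @ vs @ as) (vals \<alpha> ws @ vals \<beta> ws @ vals \<rho> as))"
    unfolding rel_OS_def by blast
  have "\<exists>\<pi>. map \<pi> (us @ vs @ as) = map \<alpha> ws @ map \<beta> ws @ map \<rho> as"
    using distinct_vars assms by (intro distinct_imp_ex_map_eq) auto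
  then obtain \<pi> where \<pi>: "map \<pi> (us @ vs @ as) = map \<alpha> ws @ map \<beta> ws @ map \<rho> as"
    by blast
  then have "map \<pi> (us @ vs @ as) = map (sterm_val \<pi>) (vals \<alpha> ws @ vals \<beta> ws @ vals \<rho> as)"
    by simp
  then have "sat_formula \<pi> S" and "sat_formula \<pi> Ob"
    using true sat_inst_iff by (auto simp: evaluates_true_def)
  moreover have "map \<pi> us = map \<alpha> ws" and "map \<pi> vs = map \<beta> ws"
    using \<pi> assms by auto
  ultimately show "\<exists>\<pi>. map \<pi> us = map \<alpha> ws \<and> map \<pi> vs = map \<beta> ws \<and> sat_formula \<pi> S \<and> sat_formula \<pi> Ob"
    by blast
next
  assume "\<exists>\<pi>. map \<pi> us = map \<alpha> ws \<and> map \<pi> vs = map \<beta> ws \<and> sat_formula \<pi> S \<and> sat_formula \<pi> Ob"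
  then obtain \<pi> where "map \<pi> us = map \<alpha> ws" and "map \<pi> vs = map \<beta> ws"
    and sat: "sat_formula \<pi> S" "sat_formula \<pi> Ob"
    by blast
  then have keys: "map \<pi> (us @ vs @ as) = map (sterm_val \<tau>) (vals \<alpha> ws @ vals \<beta> ws @ vals \<pi> as)" for \<tau>
    by simp
  have "sat_formula \<tau> (inst F (us @ vs @ as) (vals \<alpha> ws @ vals \<beta> ws @ vals \<pi> as))"
    if "F \<in> {S, Ob}" for F \<tau>
    using sat that sat_inst_iff[OF that keys] by auto
  then show "rel_OS Ob S us vs as ws \<alpha> \<beta>"
    unfolding rel_OS_def evaluates_true_def by auto
qed

lemma ex_model_of_S:
  assumes "is_specification S as" and "length us = length ws" and "length vs = length ws"
  shows "\<exists>\<pi>. map \<pi> us = map \<alpha> ws \<and> map \<pi> vs = map \<beta> ws \<and> sat_formula \<pi> S"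
proof -
  have "\<exists>\<pi>\<^sub>0. map \<pi>\<^sub>0 (us @ vs) = map \<alpha> ws @ map \<beta> ws"
    using distinct_vars assms(2,3) by (intro distinct_imp_ex_map_eq) auto
  then obtain \<pi>\<^sub>0 where \<pi>\<^sub>0: "map \<pi>\<^sub>0 (us @ vs) = map \<alpha> ws @ map \<beta> ws"
    by blast
  obtain \<pi> where agree: "\<forall>x. x \<notin> set as \<longrightarrow> \<pi> x = \<pi>\<^sub>0 x" and "sat_formula \<pi> S"
    using specification_extends[OF assms(1)] by blast
  moreover have "map \<pi> (us @ vs) = map \<pi>\<^sub>0 (us @ vs)"
    using agree distinct_vars by (intro map_cong) auto
  then have "map \<pi> us = map \<alpha> ws" and "map \<pi> vs = map \<beta> ws"
    using \<pi>\<^sub>0 assms(2) by (simp_all del: map_eq_conv)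
  ultimately show ?thesis
    by blast
qed

lemma rel_OS_refl:
  assumes spec: "is_specification S as" and len: "length us = length ws" "length vs = length ws"
    and "length xs = length ws" and "length as' = length as" and "distinct (xs @ as')"
    and deriv: "inst S (us @ vs @ as) (vlits (xs @ xs @ as'))
      \<turnstile>cp inst Ob (us @ vs @ as) (vlits (xs @ xs @ as'))"
  shows "rel_OS Ob S us vs as ws \<alpha> \<alpha>"
proof -
  obtain \<pi> where \<pi>: "map \<pi> us = map \<alpha> ws" "map \<pi> vs = map \<alpha> ws" and sat_S: "sat_formula \<pi> S"
    using ex_model_of_S[OF spec len] by blast
  have "\<exists>\<tau>. map \<tau> (xs @ as') = map \<alpha> ws @ map \<pi> as"
    using assms(4-6) by (intro distinct_imp_ex_map_eq) simp_all
  then obtain \<tau> where "map \<tau> (xs @ as') = map \<alpha> ws @ map \<pi> as"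
    by blast
  then have keys: "map \<pi> (us @ vs @ as) = map (sterm_val \<tau>) (vlits (xs @ xs @ as'))"
    using \<pi> assms(4) by simp
  have "sat_formula \<tau> (inst S (us @ vs @ as) (vlits (xs @ xs @ as')))"
    using sat_S sat_inst_iff[OF _ keys] by simp
  then have "sat_formula \<tau> (inst Ob (us @ vs @ as) (vlits (xs @ xs @ as')))"
    by (rule cp_derives_sound[OF deriv])
  then have "sat_formula \<pi> Ob"
    using sat_inst_iff[OF _ keys] by simp
  then show ?thesis
    unfolding rel_OS_iff[OF len] using \<pi> sat_S by blast
qed

lemma rel_OS_trans:
  assumes spec: "is_specification S as" and len: "length us = length ws" "length vs = length ws"
    and "length xs = length ws" "length ys = length ws" "length zs = length ws"
    and "length as' = length as" "length bs = length as" "length cs = length as"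
    and "distinct (xs @ ys @ zs @ as' @ bs @ cs)"
    and deriv: "inst S (us @ vs @ as) (vlits (xs @ ys @ as')) @
        inst Ob (us @ vs @ as) (vlits (xs @ ys @ as')) @
        inst S (us @ vs @ as) (vlits (ys @ zs @ bs)) @
        inst Ob (us @ vs @ as) (vlits (ys @ zs @ bs)) @
        inst S (us @ vs @ as) (vlits (xs @ zs @ cs))
      \<turnstile>cp inst Ob (us @ vs @ as) (vlits (xs @ zs @ cs))"
    and "rel_OS Ob S us vs as ws \<alpha> \<beta>" and "rel_OS Ob S us vs as ws \<beta> \<gamma>"
  shows "rel_OS Ob S us vs as ws \<alpha> \<gamma>"
proof -
  obtain \<pi>\<^sub>1 where \<pi>\<^sub>1: "map \<pi>\<^sub>1 us = map \<alpha> ws" "map \<pi>\<^sub>1 vs = map \<beta> ws"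
    and sat\<^sub>1: "sat_formula \<pi>\<^sub>1 S" "sat_formula \<pi>\<^sub>1 Ob"
    using assms(12) rel_OS_iff[OF len] by blast
  obtain \<pi>\<^sub>2 where \<pi>\<^sub>2: "map \<pi>\<^sub>2 us = map \<beta> ws" "map \<pi>\<^sub>2 vs = map \<gamma> ws"
    and sat\<^sub>2: "sat_formula \<pi>\<^sub>2 S" "sat_formula \<pi>\<^sub>2 Ob"
    using assms(13) rel_OS_iff[OF len] by blast
  obtain \<pi>\<^sub>3 where \<pi>\<^sub>3: "map \<pi>\<^sub>3 us = map \<alpha> ws" "map \<pi>\<^sub>3 vs = map \<gamma> ws"
    and sat\<^sub>3: "sat_formula \<pi>\<^sub>3 S"
    using ex_model_of_S[OF spec len] by blast
  have "\<exists>\<tau>. map \<tau> (xs @ ys @ zs @ as' @ bs @ cs)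
      = map \<alpha> ws @ map \<beta> ws @ map \<gamma> ws @ map \<pi>\<^sub>1 as @ map \<pi>\<^sub>2 as @ map \<pi>\<^sub>3 as"
    using assms(4-10) by (intro distinct_imp_ex_map_eq) simp_all
  then obtain \<tau> where "map \<tau> (xs @ ys @ zs @ as' @ bs @ cs)
      = map \<alpha> ws @ map \<beta> ws @ map \<gamma> ws @ map \<pi>\<^sub>1 as @ map \<pi>\<^sub>2 as @ map \<pi>\<^sub>3 as"
    by blast
  then have "map \<tau> xs = map \<alpha> ws" "map \<tau> ys = map \<beta> ws" "map \<tau> zs = map \<gamma> ws"
    and "map \<tau> as' = map \<pi>\<^sub>1 as" "map \<tau> bs = map \<pi>\<^sub>2 as" "map \<tau> cs = map \<pi>\<^sub>3 as"
    using assms(4-9) by simp_all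
  then have keys\<^sub>1: "map \<pi>\<^sub>1 (us @ vs @ as) = map (sterm_val \<tau>) (vlits (xs @ ys @ as'))"
    and keys\<^sub>2: "map \<pi>\<^sub>2 (us @ vs @ as) = map (sterm_val \<tau>) (vlits (ys @ zs @ bs))"
    and keys\<^sub>3: "map \<pi>\<^sub>3 (us @ vs @ as) = map (sterm_val \<tau>) (vlits (xs @ zs @ cs))"
    using \<pi>\<^sub>1 \<pi>\<^sub>2 \<pi>\<^sub>3 by simp_all
  have "sat_formula \<tau> (inst S (us @ vs @ as) (vlits (xs @ ys @ as')) @
        inst Ob (us @ vs @ as) (vlits (xs @ ys @ as')) @
        inst S (us @ vs @ as) (vlits (ys @ zs @ bs)) @
        inst Ob (us @ vs @ as) (vlits (ys @ zs @ bs)) @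
        inst S (us @ vs @ as) (vlits (xs @ zs @ cs)))"
    using sat\<^sub>1 sat\<^sub>2 sat\<^sub>3 sat_inst_iff[OF _ keys\<^sub>1] sat_inst_iff[OF _ keys\<^sub>2] sat_inst_iff[OF _ keys\<^sub>3]
    by simp
  then have "sat_formula \<tau> (inst Ob (us @ vs @ as) (vlits (xs @ zs @ cs)))"
    by (rule cp_derives_sound[OF deriv])
  then have "sat_formula \<pi>\<^sub>3 Ob"
    using sat_inst_iff[OF _ keys\<^sub>3] by simp
  then show ?thesis
    unfolding rel_OS_iff[OF len] using \<pi>\<^sub>3 sat\<^sub>3 by blast
qed

end

theorem lemma2:
  fixes Ob S :: "'v formula" and us vs as :: "'v list" and n :: nat
  assumes "length us = n" and "length vs = n"
    and "distinct (us @ vs @ as)"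
    and "vars_formula Ob \<union> vars_formula S \<subseteq> set us \<union> set vs \<union> set as"
    and "is_specification S as"
    and refl_deriv: "\<exists>xs as'. length xs = n \<and> length as' = length as \<and>
          distinct (xs @ as') \<and> set (xs @ as') \<inter> set (us @ vs @ as) = {} \<and>
          inst S (us @ vs @ as) (vlits (xs @ xs @ as'))
            \<turnstile>cp inst Ob (us @ vs @ as) (vlits (xs @ xs @ as'))"
    and trans_deriv: "\<exists>xs ys zs as' bs cs.
          length xs = n \<and> length ys = n \<and> length zs = n \<and>
          length as' = length as \<and> length bs = length as \<and> length cs = length as \<and>
          distinct (xs @ ys @ zs @ as' @ bs @ cs) \<and>
          set (xs @ ys @ zs @ as' @ bs @ cs) \<inter> set (us @ vs @ as) = {} \<and>
          (inst S (us @ vs @ as) (vlits (xs @ ys @ as')) @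
           inst Ob (us @ vs @ as) (vlits (xs @ ys @ as')) @
           inst S (us @ vs @ as) (vlits (ys @ zs @ bs)) @
           inst Ob (us @ vs @ as) (vlits (ys @ zs @ bs)) @
           inst S (us @ vs @ as) (vlits (xs @ zs @ cs)))
            \<turnstile>cp inst Ob (us @ vs @ as) (vlits (xs @ zs @ cs))"
  shows "\<forall>ws. length ws = n \<and> set ws \<inter> set as = {} \<longrightarrow>
           preorder_on UNIV {(\<alpha>, \<beta>). rel_OS Ob S us vs as ws \<alpha> \<beta>}"
proof (intro allI impI)
  (* Only the values of alpha, beta on ws matter, and inst substitutes all of us @ vs @ as at
     once, so neither disjointness of ws from as nor freshness of xs, ys, ... is needed. *)
  fix ws :: "'v list"
  assume "length ws = n \<and> set ws \<inter> set as = {}"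
  then have n: "n = length ws"
    by simp
  then have len: "length us = length ws" "length vs = length ws"
    using assms(1,2) by simp_all
  interpret order_encoding Ob S us vs as
    using assms(3,4) by unfold_locales
  obtain xs as' where refl: "length xs = length ws" "length as' = length as" "distinct (xs @ as')"
    "inst S (us @ vs @ as) (vlits (xs @ xs @ as')) \<turnstile>cp inst Ob (us @ vs @ as) (vlits (xs @ xs @ as'))"
    using refl_deriv unfolding n by blast
  have "rel_OS Ob S us vs as ws \<alpha> \<alpha>" for \<alpha>
    using rel_OS_refl[OF assms(5) len refl] .
  moreover obtain xs ys zs as' bs cs
    where "length xs = length ws" "length ys = length ws" "length zs = length ws"
      and "length as' = length as" "length bs = length as" "length cs = length as"
      and "distinct (xs @ ys @ zs @ as' @ bs @ cs)"
      and "inst S (us @ vs @ as) (vlits (xs @ ys @ as')) @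
        inst Ob (us @ vs @ as) (vlits (xs @ ys @ as')) @
        inst S (us @ vs @ as) (vlits (ys @ zs @ bs)) @
        inst Ob (us @ vs @ as) (vlits (ys @ zs @ bs)) @
        inst S (us @ vs @ as) (vlits (xs @ zs @ cs))
      \<turnstile>cp inst Ob (us @ vs @ as) (vlits (xs @ zs @ cs))"
    using trans_deriv unfolding n by blast
  note trans = rel_OS_trans[OF assms(5) len this]
  ultimately show "preorder_on UNIV {(\<alpha>, \<beta>). rel_OS Ob S us vs as ws \<alpha> \<beta>}"
    unfolding preorder_on_def refl_on_def trans_def by (blast intro: trans)
qed

end
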